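(* Under the standing assumptions of the context, for any real $a<b$, $\|\widehat{\varphi_l}\,'-\widehat{\varphi^M}\,'\|_{C[a,b]}=O(\mu(l))$ as $l\to\infty$, where $'$ denotes differentiation in $\omega$ and $\|\cdot\|_{C[a,b]}$ is the sup norm on $[a,b]$.
   Context: Fourier transform: $\widehat f(\omega)=\int_{\mathbb{R}}f(t)e^{-it\omega}\,dt$. Let $\theta$ be odd, non-decreasing, $C^2$, with $\theta(\omega)=\pi/4$ for $\omega>\pi/3$; fix $\pi/3\le\omega_0<\pi/2$. Meyer scaling function: $\widehat{\varphi^M}(\omega)=1$ for $|\omega|\le2\omega_0$, $=\cos(\frac\pi4+\theta(\frac{\pi}{3(\pi-2\omega_0)}(|\omega|-\pi)))$ for $2\omega_0<|\omega|\le2\pi-2\omega_0$, $=0$ otherwise. Meyer mask: $2\pi$-periodic $m^M$ with $m^M(\omega)=\widehat{\varphi^M}(2\omega)$ on $[-\pi,\pi]$. $\|\cdot\|_C$: sup norm on $[-\pi,\pi]$. A linear method of summation $(\lambda_{n,k})$ maps $f$ with Fourier coefficients $a_k,b_k$ to $u_n(f,\omega)=\frac{a_0}2+\sum_{k=1}^n\lambda_{n,k}(a_k\cos k\omega+b_k\sin k\omega)$. $m^M_l:=m^M/(\cos\frac\omega2)^{2l}$. Standing assumptions: a method and a sequence $n(l)$ are fixed with $u_l:=u_{n(l)}(m^M_l,\cdot)$, $u_{1,l}:=u_{n(l)}((m^M_l)',\cdot)$ satisfying $\alpha(l):=\|u_l-m^M_l\|_C=o(l^{-1})$, $\gamma(l):=\|u_{1,l}-(m^M_l)'\|_C=o(1)$,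 $u_l(\pi)\ne0$; $l_0$ is fixed with $\inf_{l\ge l_0}|u_l(0)|>0$ and $l\ge l_0$. $\mu(l):=l\alpha(l)+\gamma(l)$. $m_l(\omega):=(\cos\frac\omega2)^{2l}u_l(\omega)/u_l(0)$, $\widehat{\varphi_l}(\omega):=\prod_{j\ge1}m_l(\omega2^{-j})$. *)

theory Defs
  imports "HOL-Analysis.Analysis" "HOL-Library.Landau_Symbols"
begin

definition phiM_hat :: "(real \<Rightarrow> real) \<Rightarrow> real \<Rightarrow> real \<Rightarrow> real" where
  "phiM_hat \<theta> \<omega>0 \<omega> =
     (if \<bar>\<omega>\<bar> \<le> 2 * \<omega>0 then 1
      else if \<bar>\<omega>\<bar> \<le> 2 * pi - 2 * \<omega>0
        then cos (pi / 4 + \<theta> (pi / (3 * (pi - 2 * \<omega>0)) * (\<bar>\<omega>\<bar> - pi)))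
      else 0)"

definition red2pi :: "real \<Rightarrow> real" where
  "red2pi \<omega> = \<omega> - 2 * pi * of_int \<lfloor>(\<omega> + pi) / (2 * pi)\<rfloor>"

definition mM :: "(real \<Rightarrow> real) \<Rightarrow> real \<Rightarrow> real \<Rightarrow> real" where
  "mM \<theta> \<omega>0 \<omega> = phiM_hat \<theta> \<omega>0 (2 * red2pi \<omega>)"

definition mMl :: "(real \<Rightarrow> real) \<Rightarrow> real \<Rightarrow> nat \<Rightarrow> real \<Rightarrow> real" where
  "mMl \<theta> \<omega>0 l \<omega> = mM \<theta> \<omega>0 \<omega> / (cos (\<omega> / 2)) ^ (2 * l)"

definition four_a :: "(real \<Rightarrow> real) \<Rightarrow> nat \<Rightarrow> real" where
  "four_a f k = (1 / pi) * integral {-pi..pi} (\<lambda>t. f t * cos (real k * t))"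

definition four_b :: "(real \<Rightarrow> real) \<Rightarrow> nat \<Rightarrow> real" where
  "four_b f k = (1 / pi) * integral {-pi..pi} (\<lambda>t. f t * sin (real k * t))"

definition summ :: "(nat \<Rightarrow> nat \<Rightarrow> real) \<Rightarrow> nat \<Rightarrow> (real \<Rightarrow> real) \<Rightarrow> real \<Rightarrow> real" where
  "summ lam n f \<omega> = four_a f 0 / 2 +
     (\<Sum>k=1..n. lam n k * (four_a f k * cos (real k * \<omega>) + four_b f k * sin (real k * \<omega>)))"

definition supnorm :: "real set \<Rightarrow> (real \<Rightarrow> real) \<Rightarrow> real" where
  "supnorm S g = Sup ((\<lambda>x. \<bar>g x\<bar>) ` S)"

definition ul where
  "ul \<theta> \<omega>0 lam nseq l = summ lam (nseq l) (mMl \<theta> \<omega>0 l)"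

definition u1l where
  "u1l \<theta> \<omega>0 lam nseq l = summ lam (nseq l) (deriv (mMl \<theta> \<omega>0 l))"

definition alpha where
  "alpha \<theta> \<omega>0 lam nseq l = supnorm {-pi..pi} (\<lambda>\<omega>. ul \<theta> \<omega>0 lam nseq l \<omega> - mMl \<theta> \<omega>0 l \<omega>)"

definition gamma where
  "gamma \<theta> \<omega>0 lam nseq l = supnorm {-pi..pi} (\<lambda>\<omega>. u1l \<theta> \<omega>0 lam nseq l \<omega> - deriv (mMl \<theta> \<omega>0 l) \<omega>)"

definition mu where
  "mu \<theta> \<omega>0 lam nseq l = real l * alpha \<theta> \<omega>0 lam nseq l + gamma \<theta> \<omega>0 lam nseq l"

definition ml where
  "ml \<theta> \<omega>0 lam nseq l \<omega> = (cos (\<omega> / 2)) ^ (2 * l) * ul \<theta> \<omega>0 lam nseq l \<omega> / ul \<theta> \<omega>0 lam nseq l 0"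

definition phil_hat where
  "phil_hat \<theta> \<omega>0 lam nseq l \<omega> = (\<Prod>j. ml \<theta> \<omega>0 lam nseq l (\<omega> / 2 ^ Suc j))"

end

theory Submission
  imports Defs
begin

text \<open>Both \<open>phil_hat\<close> and \<open>phiM_hat\<close> satisfy the refinement relation
  \<open>\<phi>(\<omega>) = (\<Prod>j<N. m(\<omega> / 2^(j+1))) * \<phi>(\<omega> / 2^N)\<close>, with the masks \<open>ml\<close> and \<open>mM\<close>, and
  \<open>phiM_hat = 1\<close> near \<open>0\<close>; choose \<open>N\<close> so large that \<open>[a, b] / 2^N\<close> lies within \<open>\<omega>0\<close> of \<open>0\<close>.
  Writing \<open>ml = cos(\<omega>/2)^(2l) u_l / u_l(0)\<close> and \<open>mM = cos(\<omega>/2)^(2l) mMl\<close>, the bounds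
  \<open>u_l - mMl = O(alpha)\<close> and \<open>u_l' - mMl' = O(gamma)\<close> give \<open>ml' - mM' = O(mu l)\<close> uniformly and
  \<open>ml - mM = O(mu l * \<bar>\<omega>\<bar>)\<close>, so the finite products and their derivatives differ by \<open>O(mu l)\<close>.
  The tail \<open>phil_hat(\<omega> / 2^N)\<close> is the exponential of \<open>\<Sum>j. ln ml(\<omega> / 2^(N+j+1))\<close>, a series whose
  terms and derivatives decay geometrically; hence it is \<open>1 + O(mu l)\<close> with derivative \<open>O(mu l)\<close>.\<close>

section \<open>Products of factors close to one\<close>

lemma abs_mult_le: "\<bar>x\<bar> \<le> X \<Longrightarrow> \<bar>y\<bar> \<le> Y \<Longrightarrow> \<bar>x * y\<bar> \<le> X * (Y :: real)"
  unfolding abs_mult by (rule mult_mono) auto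

lemma sums_divide_pow2: "(\<lambda>n. c / 2 ^ Suc n) sums (c :: real)"
  using sums_mult[OF power_half_series, of c] by (simp add: power_one_over)

lemma abs_ln_one_plus_le: "\<bar>t\<bar> \<le> 1/2 \<Longrightarrow> \<bar>ln (1 + t)\<bar> \<le> 2 * \<bar>t :: real\<bar>"
  using abs_ln_one_plus_x_minus_x_bound[of t] mult_left_mono[of "\<bar>t\<bar>" "1/2" "\<bar>t\<bar>"]
  by (simp add: power2_eq_square abs_mult_self_eq)

lemma abs_exp_minus_one_le: "\<bar>z\<bar> \<le> 1 \<Longrightarrow> \<bar>exp z - 1\<bar> \<le> 3 * \<bar>z :: real\<bar>"
proof -
  assume z: "\<bar>z\<bar> \<le> 1"
  have "norm (exp z - exp 0) \<le> 3 * norm (z - 0)"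
  proof (rule field_differentiable_bound[where S="{-1..1}" and f=exp and f'=exp])
    show "(exp has_field_derivative exp x) (at x within {-1..1})" for x :: real
      by (rule DERIV_exp[THEN has_field_derivative_at_within])
    show "norm (exp x) \<le> 3" if "x \<in> {-1..1}" for x :: real
      using that exp_le order_trans[of "exp x" "exp 1" 3] by auto
  qed (use z in auto)
  then show ?thesis by simp
qed

lemma abs_le_quarter:
  assumes "\<bar>u\<bar> \<le> c / 2 ^ Suc n" "c \<le> 1/2"
  shows "\<bar>u :: real\<bar> \<le> 1/4"
proof -
  have "0 \<le> c / 2 ^ Suc n" using assms(1) abs_ge_zero[of u] by linarith
  then have "c \<ge> 0" using mult_nonneg_nonneg[of "c / 2 ^ Suc n" "2 ^ Suc n"] by simp
  then have "c / 2 ^ Suc n \<le> c / 2" by (intro divide_left_mono) auto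
  then show ?thesis using assms by linarith
qed

lemma has_prod_near_one:
  fixes f :: "nat \<Rightarrow> real"
  assumes close: "\<And>n. \<bar>f n - 1\<bar> \<le> c / 2 ^ Suc n" and c: "c \<le> 1/2"
  shows "summable (\<lambda>n. ln (f n))" "f has_prod exp (\<Sum>n. ln (f n))" "\<bar>\<Sum>n. ln (f n)\<bar> \<le> 2 * c"
proof -
  have small: "\<bar>f n - 1\<bar> \<le> 1/4" for n using close c by (rule abs_le_quarter)
  have ln_le: "norm (ln (f n)) \<le> 2 * c / 2 ^ Suc n" for n
  proof -
    have "\<bar>ln (1 + (f n - 1))\<bar> \<le> 2 * \<bar>f n - 1\<bar>"
      using small[of n] by (intro abs_ln_one_plus_le) simp
    then show ?thesis using close[of n] by simp
  qed
  have bound_sums: "(\<lambda>n. 2 * c / 2 ^ Suc n) sums (2 * c)" by (rule sums_divide_pow2)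
  show summable: "summable (\<lambda>n. ln (f n))"
    by (rule summable_comparison_test'[OF sums_summable[OF bound_sums] ln_le])
  have "f n > 0" for n using small[of n] unfolding abs_le_iff by linarith
  then show "f has_prod exp (\<Sum>n. ln (f n))"
    using sums_imp_has_prod_exp[OF summable_sums[OF summable]] by (simp add: has_prod_def)
  have "norm (\<Sum>n. ln (f n)) \<le> (\<Sum>n. 2 * c / 2 ^ Suc n)"
    by (rule norm_suminf_le[OF ln_le sums_summable[OF bound_sums]])
  then show "\<bar>\<Sum>n. ln (f n)\<bar> \<le> 2 * c" using sums_unique[OF bound_sums] by simp
qed

lemma abs_prodinf_minus_one_le:
  fixes f :: "nat \<Rightarrow> real"
  assumes "\<And>n. \<bar>f n - 1\<bar> \<le> c / 2 ^ Suc n" "c \<le> 1/2"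
  shows "\<bar>(\<Prod>n. f n) - 1\<bar> \<le> 6 * c"
proof -
  note prod = has_prod_near_one[OF assms]
  have "\<bar>exp (\<Sum>n. ln (f n)) - 1\<bar> \<le> 3 * \<bar>\<Sum>n. ln (f n)\<bar>"
    using prod(3) assms(2) by (intro abs_exp_minus_one_le) linarith
  then show ?thesis using prod(3) has_prod_unique[OF prod(2)] by linarith
qed

lemma has_real_derivative_prodinf:
  fixes g g' :: "nat \<Rightarrow> real \<Rightarrow> real"
  assumes S: "open S" "convex S" "y \<in> S"
    and deriv: "\<And>n x. x \<in> S \<Longrightarrow> (g n has_real_derivative g' n x) (at x)"
    and close: "\<And>n x. x \<in> S \<Longrightarrow> \<bar>g n x - 1\<bar> \<le> c / 2 ^ Suc n" and c: "c \<le> 1/2"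
    and deriv_le: "\<And>n x. x \<in> S \<Longrightarrow> \<bar>g' n x\<bar> \<le> c' / 2 ^ Suc n"
  shows "((\<lambda>x. \<Prod>n. g n x) has_real_derivative (\<Prod>n. g n y) * (\<Sum>n. g' n y / g n y)) (at y)"
    and "\<bar>(\<Prod>n. g n y) * (\<Sum>n. g' n y / g n y)\<bar> \<le> 6 * c'"
proof -
  define L where "L x = (\<Sum>n. ln (g n x))" for x
  define L' where "L' = (\<Sum>n. g' n y / g n y)"
  note prod = has_prod_near_one[OF close c]
  have half: "g n x \<ge> 1/2" if "x \<in> S" for n x
    using abs_le_quarter[OF close[OF that] c, of n] unfolding abs_le_iff by linarith
  have ln_deriv: "((\<lambda>x. ln (g n x)) has_real_derivative g' n x / g n x) (at x within S)"
    if "x \<in> S" for n x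
    using DERIV_chain2[OF DERIV_ln_divide deriv[OF that]] half[OF that, of n]
    by (auto intro: has_field_derivative_at_within)
  have ln_deriv_le: "norm (g' n x / g n x) \<le> 2 * c' / 2 ^ Suc n" if "x \<in> S" for n x
  proof -
    have "\<bar>g' n x\<bar> / g n x \<le> \<bar>g' n x\<bar> / (1/2)"
      using half[OF that, of n] by (intro divide_left_mono) auto
    then show ?thesis using deriv_le[OF that, of n] half[OF that, of n] by (simp add: abs_divide)
  qed
  have bound_sums: "(\<lambda>n. 2 * c' / 2 ^ Suc n) sums (2 * c')" by (rule sums_divide_pow2)
  have "uniformly_convergent_on S (\<lambda>n x. \<Sum>i<n. g' i x / g i x)"
    by (rule Weierstrass_m_test'[OF ln_deriv_le sums_summable[OF bound_sums]])
  from has_field_derivative_series'[OF S(2) ln_deriv this S(3) prod(1)[OF S(3)]]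
  have "(L has_real_derivative L') (at y)"
    using S by (simp add: L_def[abs_def] L'_def interior_open)
  then have "((\<lambda>x. exp (L x)) has_real_derivative exp (L y) * L') (at y)"
    by (rule DERIV_chain2[OF DERIV_exp])
  moreover have prod_eq: "(\<Prod>n. g n x) = exp (L x)" if "x \<in> S" for x
    unfolding L_def by (rule has_prod_unique[OF prod(2)[OF that], symmetric])
  ultimately show "((\<lambda>x. \<Prod>n. g n x) has_real_derivative (\<Prod>n. g n y) * L') (at y)"
    using S by (auto intro: has_field_derivative_transform_within_open)
  have "L y \<le> 1" using prod(3)[OF S(3)] c by (simp add: L_def)
  then have "exp (L y) \<le> 3" using exp_le order_trans[of "exp (L y)" "exp 1" 3] by simp
  then have "\<bar>\<Prod>n. g n y\<bar> \<le> 3" using prod_eq[OF S(3)] by simp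
  moreover have "\<bar>L'\<bar> \<le> 2 * c'"
    using norm_suminf_le[OF ln_deriv_le[OF S(3)] sums_summable[OF bound_sums]] sums_unique[OF bound_sums]
    by (simp add: L'_def)
  ultimately show "\<bar>(\<Prod>n. g n y) * L'\<bar> \<le> 6 * c'" using abs_mult_le by fastforce
qed

lemma abs_prod_le_power:
  fixes a :: "'i \<Rightarrow> real" and A :: real
  assumes "\<And>i. i \<in> I \<Longrightarrow> \<bar>a i\<bar> \<le> A"
  shows "\<bar>\<Prod>i\<in>I. a i\<bar> \<le> A ^ card I"
proof (cases "finite I")
  case True
  have "(\<Prod>i\<in>I. \<bar>a i\<bar>) \<le> (\<Prod>i\<in>I. A)" using assms by (intro prod_mono) auto
  then show ?thesis by (simp add: abs_prod)
qed simp

lemma of_nat_mult_power_pred: "real n * A ^ (n - 1) * A = real n * A ^ n"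
  by (cases n) auto

lemma abs_prod_diff_le:
  fixes a b :: "'i \<Rightarrow> real" and A e :: real
  assumes "finite I"
    and "\<And>i. i \<in> I \<Longrightarrow> \<bar>a i\<bar> \<le> A" "\<And>i. i \<in> I \<Longrightarrow> \<bar>b i\<bar> \<le> A"
    and "\<And>i. i \<in> I \<Longrightarrow> \<bar>a i - b i\<bar> \<le> e"
  shows "\<bar>(\<Prod>i\<in>I. a i) - (\<Prod>i\<in>I. b i)\<bar> \<le> card I * A ^ (card I - 1) * e"
  using assms
proof (induction I rule: finite_induct)
  case (insert x F)
  let ?n = "card F"
  have "(\<Prod>i\<in>insert x F. a i) - (\<Prod>i\<in>insert x F. b i)
      = a x * ((\<Prod>i\<in>F. a i) - (\<Prod>i\<in>F. b i)) + (a x - b x) * (\<Prod>i\<in>F. b i)"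
    using insert.hyps by (simp add: algebra_simps)
  moreover have "\<bar>a x * ((\<Prod>i\<in>F. a i) - (\<Prod>i\<in>F. b i))\<bar> \<le> A * (?n * A ^ (?n - 1) * e)"
    using insert.prems by (intro abs_mult_le insert.IH) auto
  moreover have "\<bar>(a x - b x) * (\<Prod>i\<in>F. b i)\<bar> \<le> e * A ^ ?n"
    using insert.prems by (intro abs_mult_le abs_prod_le_power) auto
  moreover have "A * (?n * A ^ (?n - 1) * e) + e * A ^ ?n
      = card (insert x F) * A ^ (card (insert x F) - 1) * e"
    using insert.hyps of_nat_mult_power_pred[of ?n A] by (simp add: algebra_simps)
  ultimately show ?case
    using abs_triangle_ineq[of "a x * ((\<Prod>i\<in>F. a i) - (\<Prod>i\<in>F. b i))" "(a x - b x) * (\<Prod>i\<in>F. b i)"]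
    by linarith
qed simp

lemma abs_sum_prod_remove_le:
  fixes a a' :: "'i \<Rightarrow> real" and A :: real
  assumes "\<And>i. i \<in> I \<Longrightarrow> \<bar>a i\<bar> \<le> A" "\<And>i. i \<in> I \<Longrightarrow> \<bar>a' i\<bar> \<le> A"
  shows "\<bar>\<Sum>i\<in>I. a' i * (\<Prod>j\<in>I - {i}. a j)\<bar> \<le> card I * A ^ card I"
proof (cases "finite I")
  case True
  have "\<bar>a' i * (\<Prod>j\<in>I - {i}. a j)\<bar> \<le> A ^ card I" if "i \<in> I" for i
  proof -
    have "\<bar>a' i * (\<Prod>j\<in>I - {i}. a j)\<bar> \<le> A * A ^ card (I - {i})"
      using assms that by (intro abs_mult_le abs_prod_le_power) auto
    also have "\<dots> = A ^ card I"
      using that True by (cases "card I") (auto simp: card_Diff_singleton card_gt_0_iff[symmetric])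
    finally show ?thesis .
  qed
  then have "(\<Sum>i\<in>I. \<bar>a' i * (\<Prod>j\<in>I - {i}. a j)\<bar>) \<le> card I * A ^ card I"
    using sum_bounded_above[of I _ "A ^ card I"] by auto
  then show ?thesis by (rule order_trans[OF sum_abs])
qed simp

lemma abs_sum_prod_remove_diff_le:
  fixes a b a' b' :: "'i \<Rightarrow> real" and A e :: real
  assumes "finite I"
    and a: "\<And>i. i \<in> I \<Longrightarrow> \<bar>a i\<bar> \<le> A" and b: "\<And>i. i \<in> I \<Longrightarrow> \<bar>b i\<bar> \<le> A"
    and b': "\<And>i. i \<in> I \<Longrightarrow> \<bar>b' i\<bar> \<le> A"
    and ab: "\<And>i. i \<in> I \<Longrightarrow> \<bar>a i - b i\<bar> \<le> e" and ab': "\<And>i. i \<in> I \<Longrightarrow> \<bar>a' i - b' i\<bar> \<le> e"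
  shows "\<bar>(\<Sum>i\<in>I. a' i * (\<Prod>j\<in>I - {i}. a j)) - (\<Sum>i\<in>I. b' i * (\<Prod>j\<in>I - {i}. b j))\<bar>
    \<le> card I ^ 2 * A ^ (card I - 1) * e"
proof -
  let ?n = "card I"
  have summand: "\<bar>a' i * (\<Prod>j\<in>I - {i}. a j) - b' i * (\<Prod>j\<in>I - {i}. b j)\<bar> \<le> ?n * A ^ (?n - 1) * e"
    if i: "i \<in> I" for i
  proof -
    let ?Pa = "\<Prod>j\<in>I - {i}. a j" and ?Pb = "\<Prod>j\<in>I - {i}. b j"
    have card: "card (I - {i}) = ?n - 1" using i assms(1) by (simp add: card_Diff_singleton)
    have n: "?n \<ge> 1" using i assms(1) by (auto simp: Suc_le_eq card_gt_0_iff)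
    have "\<bar>(a' i - b' i) * ?Pa\<bar> \<le> e * A ^ (?n - 1)"
      using ab' a i unfolding card[symmetric] by (intro abs_mult_le abs_prod_le_power) auto
    moreover have "\<bar>b' i * (?Pa - ?Pb)\<bar> \<le> A * ((?n - 1) * A ^ (?n - 1 - 1) * e)"
      using b' a b ab i assms(1) unfolding card[symmetric]
      by (intro abs_mult_le abs_prod_diff_le) auto
    moreover have "e * A ^ (?n - 1) + A * ((?n - 1) * A ^ (?n - 1 - 1) * e) = ?n * A ^ (?n - 1) * e"
    proof -
      obtain m where m: "?n = Suc m" using n by (cases ?n) auto
      show ?thesis by (cases m) (simp_all add: m algebra_simps)
    qed
    moreover have "a' i * ?Pa - b' i * ?Pb = (a' i - b' i) * ?Pa + b' i * (?Pa - ?Pb)"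
      by (simp add: algebra_simps)
    ultimately show ?thesis
      using abs_triangle_ineq[of "(a' i - b' i) * ?Pa" "b' i * (?Pa - ?Pb)"] by linarith
  qed
  have "\<bar>\<Sum>i\<in>I. a' i * (\<Prod>j\<in>I - {i}. a j) - b' i * (\<Prod>j\<in>I - {i}. b j)\<bar>
      \<le> (\<Sum>i\<in>I. ?n * A ^ (?n - 1) * e)"
    using summand by (intro order_trans[OF sum_abs sum_mono])
  then show ?thesis by (simp add: sum_subtractf power2_eq_square mult_ac)
qed

section \<open>The Meyer scaling function and mask\<close>

locale meyer_window =
  fixes \<theta> :: "real \<Rightarrow> real" and \<omega>0 :: real
  assumes theta_odd: "\<And>x. \<theta> (- x) = - \<theta> x"
    and theta_differentiable: "\<And>x. \<theta> differentiable at x"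
    and deriv_theta_differentiable: "\<And>x. deriv \<theta> differentiable at x"
    and theta_flat: "\<And>x. x > pi / 3 \<Longrightarrow> \<theta> x = pi / 4"
    and omega0: "pi / 3 \<le> \<omega>0" "\<omega>0 < pi / 2"
begin

lemma omega0_pos: "\<omega>0 > 0"
  using omega0 pi_gt_zero by linarith

lemma theta_has_derivative: "(\<theta> has_real_derivative deriv \<theta> x) (at x)"
  using theta_differentiable DERIV_deriv_iff_real_differentiable by blast

lemma theta_eq_right: assumes "x \<ge> pi/3" shows "\<theta> x = pi/4"
proof (cases "x > pi/3")
  case False
  then have x: "x = pi/3" using assms by auto
  have "(\<theta> \<longlongrightarrow> \<theta> x) (at_right x)"
    using theta_differentiable[of x] differentiable_imp_continuous_within
    unfolding continuous_within by (blast intro: filterlim_mono at_within_le_at)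
  moreover have "(\<theta> \<longlongrightarrow> pi/4) (at_right x)"
  proof (rule Lim_transform_eventually[OF tendsto_const])
    show "\<forall>\<^sub>F y in at_right x. pi / 4 = \<theta> y"
      using eventually_at_right_less[of x] by (rule eventually_mono) (use theta_flat x in auto)
  qed
  ultimately show ?thesis by (rule tendsto_unique[OF trivial_limit_at_right_real])
qed (use theta_flat in auto)

lemma theta_eq_left: assumes "x \<le> -pi/3" shows "\<theta> x = -pi/4"
  using theta_eq_right[of "-x"] theta_odd[of x] assms by simp

lemma deriv_theta_eq_0: assumes "\<bar>t\<bar> > pi/3" shows "deriv \<theta> t = 0"
proof -
  have "(\<theta> has_real_derivative 0) (at t)"
  proof (cases "t > pi/3")
    case True
    then show ?thesis
      by (intro has_field_derivative_transform_within_open[OF DERIV_const[of "pi/4"], where S="{pi/3<..}"])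
         (auto simp: theta_flat)
  next
    case False
    then have "t < -pi/3" using assms by auto
    then show ?thesis
      by (intro has_field_derivative_transform_within_open[OF DERIV_const[of "-pi/4"], where S="{..< -pi/3}"])
         (auto simp: theta_eq_left)
  qed
  then show ?thesis by (rule DERIV_imp_deriv)
qed

lemma deriv_theta_bounded: "\<exists>B. \<forall>t. \<bar>deriv \<theta> t\<bar> \<le> B"
proof -
  have "continuous_on {-pi/3..pi/3} (deriv \<theta>)"
    using deriv_theta_differentiable
    by (intro continuous_at_imp_continuous_on ballI differentiable_imp_continuous_within)
  then have "bounded (deriv \<theta> ` {-pi/3..pi/3})"
    by (intro compact_imp_bounded compact_continuous_image) auto
  then obtain B where B: "\<forall>t\<in>{-pi/3..pi/3}. \<bar>deriv \<theta> t\<bar> \<le> B"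
    unfolding bounded_real by auto
  have "\<bar>deriv \<theta> t\<bar> \<le> max B 0" for t
  proof (cases "\<bar>t\<bar> > pi/3")
    case False
    then have "t \<in> {-pi/3..pi/3}" by (auto simp: abs_le_iff)
    then show ?thesis using B by fastforce
  qed (simp add: deriv_theta_eq_0)
  then show ?thesis by blast
qed

definition dtheta_bound :: real where
  "dtheta_bound = (SOME B. \<forall>t. \<bar>deriv \<theta> t\<bar> \<le> B)"

lemma abs_deriv_theta_le: "\<bar>deriv \<theta> t\<bar> \<le> dtheta_bound"
  using someI_ex[OF deriv_theta_bounded] unfolding dtheta_bound_def by blast

lemma dtheta_bound_nonneg: "dtheta_bound \<ge> 0"
  using abs_deriv_theta_le[of 0] by linarith

definition slope :: real where
  "slope = pi / (3 * (pi - 2*\<omega>0))"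

lemma slope_pos: "slope > 0"
  using omega0 by (simp add: slope_def)

lemma slope_mult: "slope * (pi - 2*\<omega>0) = pi/3"
proof -
  have "pi - 2*\<omega>0 \<noteq> 0" using omega0 by simp
  then show ?thesis unfolding slope_def by (simp add: field_simps)
qed

text \<open>On the whole line, \<open>phiM_hat\<close> is given by its middle branch: \<open>\<theta>\<close> is constant
  \<open>\<mp>pi/4\<close> where the other two branches apply.\<close>

definition phiM_cos :: "real \<Rightarrow> real" where
  "phiM_cos w = cos (pi/4 + \<theta> (slope * (\<bar>w\<bar> - pi)))"

lemma phiM_cos_eq_1: assumes "\<bar>w\<bar> \<le> 2*\<omega>0" shows "phiM_cos w = 1"
proof -
  have "slope * (\<bar>w\<bar> - pi) = slope * (\<bar>w\<bar> - 2*\<omega>0) - pi/3"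
    using slope_mult by (simp add: algebra_simps)
  moreover have "slope * (\<bar>w\<bar> - 2*\<omega>0) \<le> 0"
    using slope_pos assms by (simp add: mult_nonneg_nonpos)
  ultimately show ?thesis by (simp add: phiM_cos_def theta_eq_left)
qed

lemma phiM_cos_eq_0: assumes "\<bar>w\<bar> \<ge> 2*pi - 2*\<omega>0" shows "phiM_cos w = 0"
proof -
  have "slope * (\<bar>w\<bar> - pi) = slope * (\<bar>w\<bar> - (2*pi - 2*\<omega>0)) + pi/3"
    using slope_mult by (simp add: algebra_simps)
  moreover have "slope * (\<bar>w\<bar> - (2*pi - 2*\<omega>0)) \<ge> 0"
    using slope_pos assms by simp
  ultimately have "pi/4 + \<theta> (slope * (\<bar>w\<bar> - pi)) = pi/2" by (simp add: theta_eq_right)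
  then show ?thesis unfolding phiM_cos_def by (metis cos_pi_half)
qed

lemma phiM_hat_eq_cos: "phiM_hat \<theta> \<omega>0 = phiM_cos"
proof
  fix w
  have "pi / (3 * (pi - 2 * \<omega>0)) = slope" by (simp add: slope_def)
  then show "phiM_hat \<theta> \<omega>0 w = phiM_cos w"
    using phiM_cos_eq_1[of w] phiM_cos_eq_0[of w] unfolding phiM_hat_def by (auto simp: phiM_cos_def)
qed

lemma phiM_hat_eq_1: "\<bar>w\<bar> \<le> 2*\<omega>0 \<Longrightarrow> phiM_hat \<theta> \<omega>0 w = 1"
  by (simp add: phiM_hat_eq_cos phiM_cos_eq_1)

lemma phiM_hat_eq_0: "\<bar>w\<bar> \<ge> 2*pi - 2*\<omega>0 \<Longrightarrow> phiM_hat \<theta> \<omega>0 w = 0"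
  by (simp add: phiM_hat_eq_cos phiM_cos_eq_0)

lemma abs_phiM_hat_le_1: "\<bar>phiM_hat \<theta> \<omega>0 w\<bar> \<le> 1"
  by (simp add: phiM_hat_eq_cos phiM_cos_def)

definition dphiM :: "real \<Rightarrow> real" where
  "dphiM w = (if \<bar>w\<bar> < 2*\<omega>0 then 0 else
     - sin (pi/4 + \<theta> (slope * (\<bar>w\<bar> - pi))) * (deriv \<theta> (slope * (\<bar>w\<bar> - pi)) * (slope * sgn w)))"

lemma phiM_hat_has_derivative: "(phiM_hat \<theta> \<omega>0 has_real_derivative dphiM w) (at w)"
proof -
  have branch: "((\<lambda>v. cos (pi/4 + \<theta> (slope * (s * v - pi)))) has_real_derivative
      - sin (pi/4 + \<theta> (slope * (s * w - pi))) * (deriv \<theta> (slope * (s * w - pi)) * (slope * s))) (at w)"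
    for s
    by (auto intro!: derivative_eq_intros DERIV_chain2[OF theta_has_derivative] simp: algebra_simps)
  consider "\<bar>w\<bar> < 2*\<omega>0" | "\<bar>w\<bar> \<ge> 2*\<omega>0" "w > 0" | "\<bar>w\<bar> \<ge> 2*\<omega>0" "w < 0"
    using omega0_pos by force
  then have "(phiM_cos has_real_derivative dphiM w) (at w)"
  proof cases
    case 1
    then have d: "dphiM w = 0" by (simp add: dphiM_def)
    show ?thesis unfolding d
      by (intro has_field_derivative_transform_within_open[OF DERIV_const[of 1], where S="ball 0 (2*\<omega>0)"])
         (use 1 phiM_cos_eq_1 in force)+
  next
    case 2
    have d: "dphiM w = - sin (pi/4 + \<theta> (slope * (1 * w - pi))) * (deriv \<theta> (slope * (1 * w - pi)) * (slope * 1))"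
      using 2 by (simp add: dphiM_def)
    show ?thesis unfolding d
      by (rule has_field_derivative_transform_within_open[OF branch[of 1], where S="{0<..}"])
         (use 2 in \<open>auto simp: phiM_cos_def\<close>)
  next
    case 3
    have d: "dphiM w = - sin (pi/4 + \<theta> (slope * (-1 * w - pi))) * (deriv \<theta> (slope * (-1 * w - pi)) * (slope * -1))"
      using 3 by (simp add: dphiM_def)
    show ?thesis unfolding d
      by (rule has_field_derivative_transform_within_open[OF branch[of "-1"], where S="{..<0}"])
         (use 3 in \<open>auto simp: phiM_cos_def\<close>)
  qed
  then show ?thesis by (simp add: phiM_hat_eq_cos)
qed

lemma abs_dphiM_le: "\<bar>dphiM w\<bar> \<le> slope * dtheta_bound"
proof -
  have "\<bar>deriv \<theta> (slope * (\<bar>w\<bar> - pi)) * (slope * sgn w)\<bar> \<le> dtheta_bound * slope"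
    by (rule abs_mult_le[OF abs_deriv_theta_le]) (use slope_pos in \<open>simp add: abs_mult abs_sgn_eq\<close>)
  then have "\<bar>sin (pi/4 + \<theta> (slope * (\<bar>w\<bar> - pi))) * (deriv \<theta> (slope * (\<bar>w\<bar> - pi)) * (slope * sgn w))\<bar>
      \<le> 1 * (dtheta_bound * slope)"
    by (rule abs_mult_le[OF abs_sin_le_one])
  then show ?thesis using slope_pos dtheta_bound_nonneg by (simp add: dphiM_def mult_ac)
qed

end

lemma cos_add_2pi_int: "cos (x + 2*pi * of_int n) = cos x"
  by (simp add: cos_add mult.assoc[symmetric])

lemma sin_add_2pi_int: "sin (x + 2*pi * of_int n) = sin x"
  by (simp add: sin_add mult.assoc[symmetric])

lemma cos_half_eq_0_imp: "cos (x/2) = 0 \<Longrightarrow> \<exists>m::int. x = pi + 2*pi * of_int m"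
proof -
  assume "cos (x/2) = 0"
  then obtain i where "x/2 = of_int i * pi + pi/2" using cos_zero_iff_int2 by blast
  then have "x = pi + 2*pi * of_int i" by (simp add: field_simps)
  then show ?thesis by blast
qed

definition cospow :: "nat \<Rightarrow> real \<Rightarrow> real" where
  "cospow l x = cos (x/2) ^ (2*l)"

definition dcospow :: "nat \<Rightarrow> real \<Rightarrow> real" where
  "dcospow l x = - real l * cos (x/2) ^ (2*l - 1) * sin (x/2)"

lemma cospow_periodic: "cospow l (x + 2*pi * of_int n) = cospow l x"
proof -
  have "cospow l x = ((1 + cos x)/2) ^ l" for x
    using cos_double_cos[of "x/2"] by (simp add: cospow_def power_mult)
  then show ?thesis by (simp add: cos_add_2pi_int)
qed

lemma cospow_has_derivative: "(cospow l has_real_derivative dcospow l x) (at x)"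
  unfolding cospow_def[abs_def] dcospow_def
  by (auto intro!: derivative_eq_intros simp: algebra_simps)

lemma abs_cospow_le_1: "\<bar>cospow l x\<bar> \<le> 1"
  unfolding cospow_def power_abs by (rule power_le_one) auto

lemma cospow_nonneg: "cospow l x \<ge> 0"
  by (simp add: cospow_def power_mult)

lemma abs_dcospow_le: "\<bar>dcospow l x\<bar> \<le> real l"
proof -
  have "\<bar>cos (x/2) ^ (2*l - 1)\<bar> \<le> 1" unfolding power_abs by (rule power_le_one) auto
  then have "\<bar>cos (x/2) ^ (2*l - 1) * sin (x/2)\<bar> \<le> 1 * 1"
    by (rule abs_mult_le) simp
  then show ?thesis unfolding dcospow_def abs_mult abs_minus_cancel
    by (simp add: mult.assoc mult_left_le)
qed

context meyer_window
begin

definition period_index :: "real \<Rightarrow> int" where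
  "period_index x = \<lfloor>(x + pi) / (2*pi)\<rfloor>"

lemma red2pi_eq: "red2pi x = x - 2*pi * of_int (period_index x)"
  by (simp add: red2pi_def period_index_def)

lemma period_index_bounds:
  "-pi \<le> x - 2*pi * of_int (period_index x)" "x - 2*pi * of_int (period_index x) < pi"
proof -
  have "of_int (period_index x) \<le> (x + pi) / (2*pi)"
    unfolding period_index_def by (rule of_int_floor_le)
  then show "-pi \<le> x - 2*pi * of_int (period_index x)" by (simp add: pos_le_divide_eq algebra_simps)
  have "(x + pi) / (2*pi) < of_int (period_index x) + 1"
    unfolding period_index_def by (rule real_of_int_floor_add_one_gt)
  then show "x - 2*pi * of_int (period_index x) < pi" by (simp add: pos_divide_less_eq algebra_simps)
qed

lemma period_index_eq_0: "\<bar>x\<bar> < pi \<Longrightarrow> period_index x = 0"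
  unfolding period_index_def
  by (subst floor_eq_iff) (simp add: pos_le_divide_eq pos_divide_less_eq abs_less_iff)

text \<open>Any shift by a multiple of \<open>2*pi\<close> that lands within \<open>pi + \<omega>0\<close> of the origin may replace
  the reduction \<open>red2pi\<close>: a second such shift lies outside the support of \<open>phiM_hat\<close>.\<close>

lemma mM_eq_phiM_hat_shift:
  assumes "\<bar>y - 2*pi * of_int j\<bar> < pi + \<omega>0"
  shows "mM \<theta> \<omega>0 y = phiM_hat \<theta> \<omega>0 (2*(y - 2*pi * of_int j))"
proof (cases "j = period_index y")
  case False
  define d where "d = y - 2*pi * of_int (period_index y)"
  define e where "e = y - 2*pi * of_int j"
  have d1: "\<bar>d\<bar> \<le> pi" using period_index_bounds[of y] by (simp add: d_def)
  have e1: "\<bar>e\<bar> < pi + \<omega>0" using assms by (simp add: e_def)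
  have ed: "e - d = 2*pi * of_int (period_index y - j)" by (simp add: d_def e_def algebra_simps)
  have "\<bar>real_of_int (period_index y - j)\<bar> \<ge> 1"
    using False of_int_leD[of "period_index y - j" "\<bar>real_of_int (period_index y - j)\<bar>"] by auto
  then have "\<bar>e - d\<bar> \<ge> 2*pi" unfolding ed abs_mult by simp
  then have "\<bar>e\<bar> \<ge> pi" "\<bar>d\<bar> > pi - \<omega>0" using d1 e1 by linarith+
  then have "phiM_hat \<theta> \<omega>0 (2*e) = 0" "phiM_hat \<theta> \<omega>0 (2*d) = 0"
    using omega0_pos by (auto intro!: phiM_hat_eq_0 simp: abs_mult)
  then show ?thesis by (simp add: mM_def red2pi_eq d_def e_def)
qed (simp add: mM_def red2pi_eq)

definition dmM :: "real \<Rightarrow> real" where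
  "dmM x = 2 * dphiM (2*(x - 2*pi * of_int (period_index x)))"

lemma mM_has_derivative: "(mM \<theta> \<omega>0 has_real_derivative dmM x) (at x)"
proof -
  define c where "c = 2*pi * of_int (period_index x)"
  have "((\<lambda>y. phiM_hat \<theta> \<omega>0 (2*(y - c))) has_real_derivative dphiM (2*(x - c)) * 2) (at x)"
    by (rule DERIV_chain2[OF phiM_hat_has_derivative]) (auto intro!: derivative_eq_intros)
  then show ?thesis unfolding dmM_def c_def[symmetric] mult.commute[of 2 "dphiM _"]
  proof (rule has_field_derivative_transform_within_open[where S="ball c (pi + \<omega>0)"])
    show "x \<in> ball c (pi + \<omega>0)"
      using period_index_bounds[of x] omega0_pos by (simp add: c_def dist_real_def abs_le_iff)
    show "phiM_hat \<theta> \<omega>0 (2*(y - c)) = mM \<theta> \<omega>0 y" if "y \<in> ball c (pi + \<omega>0)" for y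
      using that mM_eq_phiM_hat_shift[of y "period_index x"]
      by (simp add: c_def dist_real_def abs_minus_commute)
  qed simp
qed

abbreviation dmM_bound :: real where
  "dmM_bound \<equiv> 2 * slope * dtheta_bound"

lemma dmM_bound_nonneg: "dmM_bound \<ge> 0"
  using slope_pos dtheta_bound_nonneg by simp

lemma abs_dmM_le: "\<bar>dmM x\<bar> \<le> dmM_bound"
  using abs_dphiM_le[of "2*(x - 2*pi * of_int (period_index x))"] by (simp add: dmM_def)

lemma abs_mM_le_1: "\<bar>mM \<theta> \<omega>0 x\<bar> \<le> 1"
  by (simp add: mM_def abs_phiM_hat_le_1)

lemma mM_eq_1: "\<bar>x\<bar> \<le> \<omega>0 \<Longrightarrow> mM \<theta> \<omega>0 x = 1"
  using mM_eq_phiM_hat_shift[of x 0] pi_gt_zero by (simp add: phiM_hat_eq_1 abs_mult)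

lemma dmM_eq_0: "\<bar>x\<bar> < \<omega>0 \<Longrightarrow> dmM x = 0"
  using period_index_eq_0[of x] omega0 by (simp add: dmM_def dphiM_def abs_mult)

lemma mM_periodic: "mM \<theta> \<omega>0 (x + 2*pi * of_int n) = mM \<theta> \<omega>0 x"
proof -
  have b: "\<bar>x - 2*pi * of_int (period_index x)\<bar> < pi + \<omega>0"
    using period_index_bounds[of x] omega0_pos by (simp add: abs_less_iff)
  have "mM \<theta> \<omega>0 (x + 2*pi * of_int n)
      = phiM_hat \<theta> \<omega>0 (2*((x + 2*pi * of_int n) - 2*pi * of_int (period_index x + n)))"
    by (rule mM_eq_phiM_hat_shift) (use b in \<open>simp add: algebra_simps\<close>)
  also have "\<dots> = mM \<theta> \<omega>0 x" using mM_eq_phiM_hat_shift[OF b] by (simp add: algebra_simps)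
  finally show ?thesis .
qed

lemma mM_eq_0_near_odd_pi: "\<bar>y - (pi + 2*pi * of_int m)\<bar> < \<omega>0 \<Longrightarrow> mM \<theta> \<omega>0 y = 0"
proof -
  assume "\<bar>y - (pi + 2*pi * of_int m)\<bar> < \<omega>0"
  then have c: "\<bar>y - 2*pi * of_int m\<bar> < pi + \<omega>0" "\<bar>y - 2*pi * of_int m\<bar> > pi - \<omega>0"
    using omega0 pi_gt_zero unfolding abs_less_iff by linarith+
  then show ?thesis
    using mM_eq_phiM_hat_shift[OF c(1)] by (simp add: phiM_hat_eq_0 abs_mult)
qed

lemma phiM_hat_refinement: "phiM_hat \<theta> \<omega>0 w = mM \<theta> \<omega>0 (w/2) * phiM_hat \<theta> \<omega>0 (w/2)"
proof (cases "\<bar>w/2\<bar> < pi + \<omega>0")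
  case True
  then have "mM \<theta> \<omega>0 (w/2) = phiM_hat \<theta> \<omega>0 w" using mM_eq_phiM_hat_shift[of "w/2" 0] by simp
  moreover have "\<bar>w\<bar> < 2*pi - 2*\<omega>0 \<Longrightarrow> \<bar>w/2\<bar> \<le> 2*\<omega>0" using omega0 by simp
  ultimately show ?thesis
    using phiM_hat_eq_1[of "w/2"] phiM_hat_eq_0[of w] by (cases "\<bar>w\<bar> < 2*pi - 2*\<omega>0") auto
next
  case False
  then have "phiM_hat \<theta> \<omega>0 w = 0" "phiM_hat \<theta> \<omega>0 (w/2) = 0"
    using omega0 pi_gt_zero by (auto intro!: phiM_hat_eq_0)
  then show ?thesis by simp
qed

lemma phiM_hat_eq_prod:
  "phiM_hat \<theta> \<omega>0 w = (\<Prod>j<N. mM \<theta> \<omega>0 (w / 2 ^ Suc j)) * phiM_hat \<theta> \<omega>0 (w / 2 ^ N)"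
proof (induction N)
  case (Suc N)
  then show ?case using phiM_hat_refinement[of "w / 2 ^ N"] by (simp add: field_simps mult_ac)
qed simp

lemma cospow_mult_mMl: "cospow l x * mMl \<theta> \<omega>0 l x = mM \<theta> \<omega>0 x"
proof (cases "cospow l x = 0")
  case True
  then obtain m where "x = pi + 2*pi * of_int m" using cos_half_eq_0_imp by (auto simp: cospow_def)
  then show ?thesis using True mM_eq_0_near_odd_pi[of x m] omega0_pos by simp
qed (simp add: mMl_def cospow_def)

lemma mMl_periodic: "mMl \<theta> \<omega>0 l (x + 2*pi * of_int n) = mMl \<theta> \<omega>0 l x"
  using cospow_periodic[of l x n] mM_periodic[of x n] by (simp add: mMl_def cospow_def)

lemma mMl_at_0: "mMl \<theta> \<omega>0 l 0 = 1"
  using mM_eq_1[of 0] omega0_pos by (simp add: mMl_def)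

text \<open>At the zeros \<open>pi + 2*pi*m\<close> of \<open>cospow l\<close> the quotient \<open>mMl\<close> is \<open>0 / 0 = 0\<close>, and
  \<open>mM\<close> vanishes on a neighbourhood, so \<open>mMl\<close> is differentiable there with derivative 0.\<close>

definition dmMl :: "nat \<Rightarrow> real \<Rightarrow> real" where
  "dmMl l x = (if cospow l x = 0 then 0 else
     (dmM x * cospow l x - mM \<theta> \<omega>0 x * dcospow l x) / (cospow l x * cospow l x))"

lemma mMl_has_derivative_0_near_odd_pi:
  assumes "\<bar>x - (pi + 2*pi * of_int m)\<bar> < \<omega>0"
  shows "(mMl \<theta> \<omega>0 l has_real_derivative 0) (at x)"
  using assms
  by (intro has_field_derivative_transform_within_open[OF DERIV_const[of 0],
        where S="ball (pi + 2*pi * of_int m) \<omega>0"])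
     (auto simp: dist_real_def abs_minus_commute mMl_def mM_eq_0_near_odd_pi)

lemma mMl_has_derivative: "(mMl \<theta> \<omega>0 l has_real_derivative dmMl l x) (at x)"
proof (cases "cospow l x = 0")
  case True
  then obtain m where "x = pi + 2*pi * of_int m" using cos_half_eq_0_imp by (auto simp: cospow_def)
  then show ?thesis
    using True mMl_has_derivative_0_near_odd_pi[of x m l] omega0_pos by (simp add: dmMl_def)
next
  case False
  have "mMl \<theta> \<omega>0 l = (\<lambda>x. mM \<theta> \<omega>0 x / cospow l x)" by (simp add: mMl_def cospow_def fun_eq_iff)
  then show ?thesis
    using DERIV_divide[OF mM_has_derivative cospow_has_derivative False] False by (simp add: dmMl_def)
qed

lemma deriv_mMl: "deriv (mMl \<theta> \<omega>0 l) = dmMl l"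
  using DERIV_imp_deriv[OF mMl_has_derivative] by blast

lemma dmMl_periodic: "dmMl l (x + 2*pi * of_int n) = dmMl l x"
proof -
  have "((\<lambda>y. mMl \<theta> \<omega>0 l (y + 2*pi * of_int n)) has_real_derivative dmMl l (x + 2*pi * of_int n)) (at x)"
    using mMl_has_derivative[of l "x + 2*pi * of_int n"] by (simp add: DERIV_shift)
  then show ?thesis using mMl_has_derivative[of l x] DERIV_unique by (simp add: mMl_periodic)
qed

lemma abs_dmMl_le:
  assumes "x \<in> {-pi..pi}"
  shows "\<bar>dmMl l x\<bar> \<le> (dmM_bound + real l) * 16 ^ l"
proof (cases "\<bar>x\<bar> \<le> pi - \<omega>0")
  case True
  have "cos (pi/3) \<le> cos (\<bar>x\<bar>/2)" using True omega0 by (intro cos_monotone_0_pi_le) auto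
  moreover have "cos (\<bar>x\<bar>/2) = cos (x/2)" by (cases "x \<ge> 0") simp_all
  ultimately have "cos (x/2) \<ge> 1/2" by (simp add: cos_60)
  then have "cospow l x \<ge> (1/2) ^ (2*l)" unfolding cospow_def by (rule power_mono) simp
  then have cl: "cospow l x \<ge> 1/4^l" by (simp add: power_mult power_divide)
  then have pos: "cospow l x > 0" by (simp add: less_le_trans[OF _ cl])
  have "\<bar>dmM x * cospow l x\<bar> \<le> dmM_bound * 1" "\<bar>mM \<theta> \<omega>0 x * dcospow l x\<bar> \<le> 1 * real l"
    by (intro abs_mult_le abs_dmM_le abs_cospow_le_1 abs_mM_le_1 abs_dcospow_le)+
  then have num: "\<bar>dmM x * cospow l x - mM \<theta> \<omega>0 x * dcospow l x\<bar> \<le> dmM_bound + real l"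
    by linarith
  have "1 / 16^l = (1/4^l) * (1/(4::real)^l)" by (simp add: power_mult_distrib[symmetric])
  also have "\<dots> \<le> cospow l x * cospow l x" using cl cospow_nonneg by (intro mult_mono) auto
  finally have den: "1 / 16^l \<le> cospow l x * cospow l x" .
  have "\<bar>dmMl l x\<bar> = \<bar>dmM x * cospow l x - mM \<theta> \<omega>0 x * dcospow l x\<bar> / (cospow l x * cospow l x)"
    using pos by (simp add: dmMl_def abs_divide)
  also have "\<dots> \<le> (dmM_bound + real l) / (1/16^l)"
    by (rule frac_le) (use num den dmM_bound_nonneg in auto)
  finally show ?thesis by simp
next
  case False
  then consider "\<bar>x - (pi + 2*pi * of_int 0)\<bar> < \<omega>0" | "\<bar>x - (pi + 2*pi * of_int (-1))\<bar> < \<omega>0"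
    using assms omega0_pos by force
  then have "dmMl l x = 0"
    by cases (use mMl_has_derivative_0_near_odd_pi mMl_has_derivative DERIV_unique in blast)+
  then show ?thesis using dmM_bound_nonneg by simp
qed

end

section \<open>Fourier partial sums\<close>

lemma has_integral_deriv_minus_pi_pi:
  assumes "\<And>x. (h has_real_derivative h' x) (at x)"
  shows "(h' has_integral (h pi - h (-pi))) {-pi..pi}"
proof (rule fundamental_theorem_of_calculus)
  fix x assume "x \<in> {-pi..pi}"
  show "(h has_vector_derivative h' x) (at x within {-pi..pi})"
    using assms[of x] unfolding has_real_derivative_iff_has_vector_derivative
    by (rule has_vector_derivative_at_within)
qed simp

lemma four_coeffs_deriv:
  fixes g g' :: "real \<Rightarrow> real"
  assumes d: "\<And>x. (g has_real_derivative g' x) (at x)" and p: "g (-pi) = g pi"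
  shows "four_a g' k = real k * four_b g k" "four_b g' k = - real k * four_a g k"
proof -
  have cont: "continuous_on {-pi..pi} g"
    by (intro continuous_at_imp_continuous_on ballI DERIV_isCont[OF d])
  have ci: "(\<lambda>t. g t * cos (real k * t)) integrable_on {-pi..pi}"
    by (intro integrable_continuous_interval continuous_intros cont)
  have si: "(\<lambda>t. g t * sin (real k * t)) integrable_on {-pi..pi}"
    by (intro integrable_continuous_interval continuous_intros cont)
  have "((\<lambda>t. g t * cos (real k * t)) has_real_derivative
      g' x * cos (real k * x) - real k * (g x * sin (real k * x))) (at x)" for x
    by (auto intro!: derivative_eq_intros d simp: algebra_simps)
  from has_integral_deriv_minus_pi_pi[OF this]
  have "((\<lambda>x. g' x * cos (real k * x) - real k * (g x * sin (real k * x))) has_integral 0) {-pi..pi}"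
    using p by simp
  from has_integral_add[OF this has_integral_mult_right[OF integrable_integral[OF si], where c="real k"]]
  show "four_a g' k = real k * four_b g k"
    unfolding four_a_def four_b_def by (simp add: integral_unique)
  have "((\<lambda>t. g t * sin (real k * t)) has_real_derivative
      g' x * sin (real k * x) + real k * (g x * cos (real k * x))) (at x)" for x
    by (auto intro!: derivative_eq_intros d simp: algebra_simps)
  from has_integral_deriv_minus_pi_pi[OF this]
  have "((\<lambda>x. g' x * sin (real k * x) + real k * (g x * cos (real k * x))) has_integral 0) {-pi..pi}"
    using p by (simp add: sin_npi)
  from has_integral_diff[OF this has_integral_mult_right[OF integrable_integral[OF ci], where c="real k"]]
  show "four_b g' k = - real k * four_a g k"
    unfolding four_a_def four_b_def by (simp add: integral_unique)
qed

lemma summ_has_derivative: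
  fixes g g' :: "real \<Rightarrow> real"
  assumes d: "\<And>x. (g has_real_derivative g' x) (at x)" and p: "g (-pi) = g pi"
  shows "(summ lam n g has_real_derivative summ lam n g' x) (at x)"
proof -
  have "(summ lam n g has_real_derivative (\<Sum>k=1..n. lam n k * (four_a g k * (- sin (real k * x) * real k) +
        four_b g k * (cos (real k * x) * real k)))) (at x)"
    unfolding summ_def[abs_def] by (auto intro!: derivative_eq_intros sum.cong simp: algebra_simps)
  moreover have "(\<Sum>k=1..n. lam n k * (four_a g k * (- sin (real k * x) * real k) +
        four_b g k * (cos (real k * x) * real k))) = summ lam n g' x"
    unfolding summ_def four_coeffs_deriv[OF d p] by (simp add: algebra_simps)
  ultimately show ?thesis by simp
qed

lemma summ_periodic: "summ lam n f (x + 2*pi * of_int m) = summ lam n f x"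
proof -
  have e: "real k * (x + 2*pi * of_int m) = real k * x + 2*pi * of_int (int k * m)" for k
    by (simp add: algebra_simps)
  show ?thesis unfolding summ_def e cos_add_2pi_int sin_add_2pi_int ..
qed

lemma continuous_on_summ: "continuous_on S (summ lam n f)"
  unfolding summ_def[abs_def] by (intro continuous_intros)

lemma abs_le_supnorm:
  assumes "\<And>x. x \<in> S \<Longrightarrow> \<bar>f x\<bar> \<le> B" "x \<in> S"
  shows "\<bar>f x\<bar> \<le> supnorm S f"
  unfolding supnorm_def by (rule cSup_upper) (use assms in \<open>auto intro!: bdd_aboveI2\<close>)

lemma supnorm_le:
  assumes "\<And>x. x \<in> S \<Longrightarrow> \<bar>f x\<bar> \<le> B" "S \<noteq> {}"
  shows "supnorm S f \<le> B"
  unfolding supnorm_def by (rule cSup_least) (use assms in auto)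

lemma continuous_on_interval_abs_bounded:
  assumes "continuous_on {a..b} (f :: real \<Rightarrow> real)"
  shows "\<exists>B. \<forall>x\<in>{a..b}. \<bar>f x\<bar> \<le> B"
proof -
  have "bounded (f ` {a..b})"
    by (intro compact_imp_bounded compact_continuous_image assms) auto
  then show ?thesis unfolding bounded_real by auto
qed

section \<open>The normalised summation masks and their products\<close>

locale meyer_summation = meyer_window +
  fixes lam :: "nat \<Rightarrow> nat \<Rightarrow> real" and nseq :: "nat \<Rightarrow> nat"
begin

abbreviation "U l \<equiv> ul \<theta> \<omega>0 lam nseq l"
abbreviation "U1 l \<equiv> u1l \<theta> \<omega>0 lam nseq l"
abbreviation "al l \<equiv> alpha \<theta> \<omega>0 lam nseq l"
abbreviation "ga l \<equiv> gamma \<theta> \<omega>0 lam nseq l"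

lemma U1_eq: "U1 l = summ lam (nseq l) (dmMl l)"
  by (simp add: u1l_def deriv_mMl)

lemma U_has_derivative: "(U l has_real_derivative U1 l x) (at x)"
  unfolding ul_def U1_eq
  using mMl_has_derivative mMl_periodic[of l "-pi" 1] by (intro summ_has_derivative) simp_all

lemma shift_into_minus_pi_pi: "\<exists>y n. y \<in> {-pi..pi} \<and> x = y + 2*pi * of_int n"
  using period_index_bounds[of x]
  by (intro exI[of _ "x - 2*pi * of_int (period_index x)"] exI[of _ "period_index x"]) auto

text \<open>By periodicity, the sup norms \<open>alpha\<close> and \<open>gamma\<close> over \<open>[-pi, pi]\<close> bound the errors on the
  whole line.\<close>

lemma abs_U_minus_mMl_le: "\<bar>U l x - mMl \<theta> \<omega>0 l x\<bar> \<le> al l"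
proof -
  obtain y n where y: "y \<in> {-pi..pi}" "x = y + 2*pi * of_int n" using shift_into_minus_pi_pi by blast
  have "continuous_on {-pi..pi} (\<lambda>x. U l x - mMl \<theta> \<omega>0 l x)"
    unfolding ul_def using mMl_has_derivative
    by (intro continuous_intros continuous_on_summ continuous_at_imp_continuous_on ballI DERIV_isCont)
  then obtain B where "\<forall>x\<in>{-pi..pi}. \<bar>U l x - mMl \<theta> \<omega>0 l x\<bar> \<le> B"
    using continuous_on_interval_abs_bounded by blast
  then have "\<bar>U l y - mMl \<theta> \<omega>0 l y\<bar> \<le> al l"
    unfolding alpha_def by (intro abs_le_supnorm[OF _ y(1)]) auto
  then show ?thesis using y(2) by (simp add: ul_def summ_periodic mMl_periodic)
qed

lemma abs_U1_minus_dmMl_le: "\<bar>U1 l x - dmMl l x\<bar> \<le> ga l"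
proof -
  obtain y n where y: "y \<in> {-pi..pi}" "x = y + 2*pi * of_int n" using shift_into_minus_pi_pi by blast
  obtain B where B: "\<forall>x\<in>{-pi..pi}. \<bar>U1 l x\<bar> \<le> B"
    using continuous_on_interval_abs_bounded[OF continuous_on_summ] unfolding U1_eq by blast
  have "\<bar>U1 l x - dmMl l x\<bar> \<le> B + (dmM_bound + real l) * 16 ^ l" if "x \<in> {-pi..pi}" for x
  proof -
    have "\<bar>U1 l x\<bar> \<le> B" using B that by blast
    then show ?thesis
      using abs_dmMl_le[OF that, of l] abs_triangle_ineq4[of "U1 l x" "dmMl l x"] by linarith
  qed
  then have "\<bar>U1 l y - dmMl l y\<bar> \<le> ga l"
    unfolding gamma_def deriv_mMl by (intro abs_le_supnorm[OF _ y(1)]) auto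
  then show ?thesis using y(2) by (simp add: U1_eq summ_periodic dmMl_periodic)
qed

lemma alpha_nonneg: "al l \<ge> 0"
  using abs_U_minus_mMl_le[of l 0] by linarith

lemma gamma_nonneg: "ga l \<ge> 0"
  using abs_U1_minus_dmMl_le[of l 0] by linarith

definition dml :: "nat \<Rightarrow> real \<Rightarrow> real" where
  "dml l x = (dcospow l x * U l x + cospow l x * U1 l x) / U l 0"

lemma ml_eq: "ml \<theta> \<omega>0 lam nseq l = (\<lambda>x. cospow l x * U l x / U l 0)"
  by (simp add: ml_def cospow_def fun_eq_iff)

lemma ml_has_derivative: "(ml \<theta> \<omega>0 lam nseq l has_real_derivative dml l x) (at x)"
  unfolding ml_eq dml_def
  by (intro DERIV_cdivide DERIV_mult[OF cospow_has_derivative U_has_derivative, THEN DERIV_cong])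
     (simp add: mult.commute)

lemma ml_at_0: "U l 0 \<noteq> 0 \<Longrightarrow> ml \<theta> \<omega>0 lam nseq l 0 = 1"
  by (simp add: ml_eq cospow_def)

lemma dmM_eq: "dmM x = dcospow l x * mMl \<theta> \<omega>0 l x + cospow l x * dmMl l x"
proof -
  have "((\<lambda>x. cospow l x * mMl \<theta> \<omega>0 l x) has_real_derivative
      dcospow l x * mMl \<theta> \<omega>0 l x + cospow l x * dmMl l x) (at x)"
    using DERIV_mult[OF cospow_has_derivative mMl_has_derivative] by (simp add: mult.commute)
  then have "(mM \<theta> \<omega>0 has_real_derivative dcospow l x * mMl \<theta> \<omega>0 l x + cospow l x * dmMl l x) (at x)"
    by (simp add: cospow_mult_mMl)
  then show ?thesis by (rule DERIV_unique[OF mM_has_derivative])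
qed

definition mask_error :: "real \<Rightarrow> nat \<Rightarrow> real" where
  "mask_error d l = (real l * al l + ga l + dmM_bound * al l) / d"

lemma mask_error_nonneg: "d > 0 \<Longrightarrow> mask_error d l \<ge> 0"
  using alpha_nonneg[of l] gamma_nonneg[of l] dmM_bound_nonneg by (simp add: mask_error_def)

lemma abs_dml_minus_dmM_le:
  assumes "d > 0" "d \<le> \<bar>U l 0\<bar>"
  shows "\<bar>dml l x - dmM x\<bar> \<le> mask_error d l"
proof -
  define u0 where "u0 = U l 0"
  have u0: "u0 \<noteq> 0" "\<bar>u0\<bar> \<ge> d" using assms by (auto simp: u0_def)
  have "\<bar>1 - u0\<bar> \<le> al l"
    using abs_U_minus_mMl_le[of l 0] mMl_at_0[of l] by (simp add: u0_def abs_minus_commute)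
  then have "\<bar>dmM x * (1 - u0)\<bar> \<le> dmM_bound * al l" by (intro abs_mult_le abs_dmM_le)
  moreover have "\<bar>dcospow l x * (U l x - mMl \<theta> \<omega>0 l x)\<bar> \<le> real l * al l"
    by (intro abs_mult_le abs_dcospow_le abs_U_minus_mMl_le)
  moreover have "\<bar>cospow l x * (U1 l x - dmMl l x)\<bar> \<le> 1 * ga l"
    by (intro abs_mult_le abs_cospow_le_1 abs_U1_minus_dmMl_le)
  ultimately have num: "\<bar>dcospow l x * (U l x - mMl \<theta> \<omega>0 l x) + cospow l x * (U1 l x - dmMl l x)
      + dmM x * (1 - u0)\<bar> \<le> real l * al l + ga l + dmM_bound * al l"
    using abs_triangle_ineq[of "dcospow l x * (U l x - mMl \<theta> \<omega>0 l x)" "cospow l x * (U1 l x - dmMl l x)"]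
      abs_triangle_ineq[of "dcospow l x * (U l x - mMl \<theta> \<omega>0 l x) + cospow l x * (U1 l x - dmMl l x)"
        "dmM x * (1 - u0)"]
    by linarith
  have "dml l x - dmM x = (dcospow l x * (U l x - mMl \<theta> \<omega>0 l x) + cospow l x * (U1 l x - dmMl l x)
      + dmM x * (1 - u0)) / u0"
    using u0(1) unfolding dml_def dmM_eq[of x l] u0_def[symmetric] by (simp add: field_simps)
  also have "\<bar>\<dots>\<bar> \<le> (real l * al l + ga l + dmM_bound * al l) / d"
    unfolding abs_divide using num u0 assms(1) by (intro frac_le) auto
  finally show ?thesis by (simp add: mask_error_def)
qed

lemma abs_ml_minus_mM_le:
  assumes "d > 0" "d \<le> \<bar>U l 0\<bar>"
  shows "\<bar>ml \<theta> \<omega>0 lam nseq l x - mM \<theta> \<omega>0 x\<bar> \<le> mask_error d l * \<bar>x\<bar>"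
proof -
  let ?f = "\<lambda>x. ml \<theta> \<omega>0 lam nseq l x - mM \<theta> \<omega>0 x"
  have "norm (?f x - ?f 0) \<le> mask_error d l * norm (x - 0)"
  proof (rule field_differentiable_bound[of UNIV])
    show "(?f has_field_derivative dml l z - dmM z) (at z within UNIV)" for z
      by (rule DERIV_diff[OF ml_has_derivative mM_has_derivative])
    show "norm (dml l z - dmM z) \<le> mask_error d l" for z
      using abs_dml_minus_dmM_le[OF assms] by simp
  qed auto
  moreover have "ml \<theta> \<omega>0 lam nseq l 0 = 1" using assms by (intro ml_at_0) auto
  moreover have "mM \<theta> \<omega>0 0 = 1" using mM_eq_1[of 0] omega0_pos by simp
  ultimately show ?thesis by simp
qed

end

lemma has_real_derivative_dilate:
  assumes "(f has_real_derivative D) (at (x / c))"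
  shows "((\<lambda>z. f (z / c)) has_real_derivative D / c) (at x)"
  using DERIV_chain2[OF assms DERIV_cdivide[OF DERIV_ident]] by simp

lemma has_real_derivative_prod_dilates:
  assumes "\<And>z. (f has_real_derivative f' z) (at z)"
  shows "((\<lambda>z. \<Prod>j<N. f (z / 2 ^ Suc j)) has_real_derivative
    (\<Sum>i<N. f' (x / 2 ^ Suc i) / 2 ^ Suc i * (\<Prod>j\<in>{..<N} - {i}. f (x / 2 ^ Suc j)))) (at x)"
  by (intro has_field_derivative_prod has_real_derivative_dilate assms)

context meyer_summation
begin

lemma phil_hat_near_0:
  assumes d: "d > 0" "d \<le> \<bar>U l 0\<bar>" and E: "mask_error d l * \<omega>0 \<le> 1/2" and y: "\<bar>y\<bar> < \<omega>0"
  shows "convergent_prod (\<lambda>j. ml \<theta> \<omega>0 lam nseq l (y / 2 ^ Suc j))"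
    and "\<bar>phil_hat \<theta> \<omega>0 lam nseq l y - 1\<bar> \<le> 6 * (mask_error d l * \<omega>0)"
    and "(phil_hat \<theta> \<omega>0 lam nseq l has_real_derivative deriv (phil_hat \<theta> \<omega>0 lam nseq l) y) (at y)"
    and "\<bar>deriv (phil_hat \<theta> \<omega>0 lam nseq l) y\<bar> \<le> 6 * mask_error d l"
proof -
  define E where "E = mask_error d l"
  define g where "g n z = ml \<theta> \<omega>0 lam nseq l (z / 2 ^ Suc n)" for n z
  define g' where "g' n z = dml l (z / 2 ^ Suc n) / 2 ^ Suc n" for n z
  let ?S = "ball (0::real) \<omega>0"
  have E0: "E \<ge> 0" using mask_error_nonneg[OF d(1)] by (simp add: E_def)
  have scaled: "\<bar>z / 2 ^ Suc n\<bar> = \<bar>z\<bar> / 2 ^ Suc n" "\<bar>z / 2 ^ Suc n\<bar> < \<omega>0" if "z \<in> ?S" for z n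
  proof -
    show "\<bar>z / 2 ^ Suc n\<bar> = \<bar>z\<bar> / 2 ^ Suc n" by (simp add: abs_divide)
    also have "\<dots> \<le> \<bar>z\<bar> / 1" by (intro divide_left_mono) (auto simp del: power_Suc)
    finally show "\<bar>z / 2 ^ Suc n\<bar> < \<omega>0" using that by simp
  qed
  have close: "\<bar>g n z - 1\<bar> \<le> E * \<omega>0 / 2 ^ Suc n" if "z \<in> ?S" for n z
  proof -
    have "\<bar>g n z - 1\<bar> = \<bar>ml \<theta> \<omega>0 lam nseq l (z / 2 ^ Suc n) - mM \<theta> \<omega>0 (z / 2 ^ Suc n)\<bar>"
      using mM_eq_1 scaled(2)[OF that, of n] by (simp add: g_def)
    also have "\<dots> \<le> E * (\<bar>z\<bar> / 2 ^ Suc n)"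
      unfolding E_def scaled(1)[OF that, of n, symmetric] by (rule abs_ml_minus_mM_le[OF d])
    also have "\<dots> \<le> E * (\<omega>0 / 2 ^ Suc n)"
      using that E0 by (intro mult_left_mono divide_right_mono) auto
    finally show ?thesis by simp
  qed
  have deriv_le: "\<bar>g' n z\<bar> \<le> E / 2 ^ Suc n" if "z \<in> ?S" for n z
  proof -
    have "\<bar>dml l (z / 2 ^ Suc n)\<bar> \<le> E"
      using abs_dml_minus_dmM_le[OF d, of "z / 2 ^ Suc n"] dmM_eq_0[OF scaled(2)[OF that, of n]]
      by (simp add: E_def del: power_Suc)
    then show ?thesis by (simp add: g'_def abs_divide divide_right_mono del: power_Suc)
  qed
  have deriv: "(g n has_real_derivative g' n z) (at z)" for n z
    unfolding g_def[abs_def] g'_def by (rule has_real_derivative_dilate[OF ml_has_derivative])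
  have yS: "y \<in> ?S" using y by simp
  note prod = has_real_derivative_prodinf[OF open_ball convex_ball yS deriv close E[folded E_def] deriv_le]
  have phil_eq: "phil_hat \<theta> \<omega>0 lam nseq l = (\<lambda>z. \<Prod>n. g n z)" by (simp add: phil_hat_def g_def fun_eq_iff)
  from prod(1) DERIV_imp_deriv[OF prod(1)]
  show "(phil_hat \<theta> \<omega>0 lam nseq l has_real_derivative deriv (phil_hat \<theta> \<omega>0 lam nseq l) y) (at y)"
    and "\<bar>deriv (phil_hat \<theta> \<omega>0 lam nseq l) y\<bar> \<le> 6 * mask_error d l"
    using prod(2) unfolding phil_eq E_def by simp_all
  show "convergent_prod (\<lambda>j. ml \<theta> \<omega>0 lam nseq l (y / 2 ^ Suc j))"
    using has_prod_near_one(2)[OF close[OF yS] E[folded E_def]] by (simp add: g_def has_prod_iff)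
  show "\<bar>phil_hat \<theta> \<omega>0 lam nseq l y - 1\<bar> \<le> 6 * (mask_error d l * \<omega>0)"
    using abs_prodinf_minus_one_le[OF close[OF yS] E[folded E_def]] by (simp add: phil_eq E_def)
qed

lemma phil_hat_eq_prod:
  assumes d: "d > 0" "d \<le> \<bar>U l 0\<bar>" and E: "mask_error d l * \<omega>0 \<le> 1/2" and x: "\<bar>x\<bar> < 2 ^ N * \<omega>0"
  shows "phil_hat \<theta> \<omega>0 lam nseq l x
    = (\<Prod>j<N. ml \<theta> \<omega>0 lam nseq l (x / 2 ^ Suc j)) * phil_hat \<theta> \<omega>0 lam nseq l (x / 2 ^ N)"
proof -
  define g where "g j = ml \<theta> \<omega>0 lam nseq l (x / 2 ^ Suc j)" for j
  have tail: "(\<lambda>j. g (j + N)) = (\<lambda>j. ml \<theta> \<omega>0 lam nseq l (x / 2 ^ N / 2 ^ Suc j))"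
    by (simp add: g_def power_add mult_ac fun_eq_iff)
  have "\<bar>x / 2 ^ N\<bar> < \<omega>0" using x by (simp add: abs_divide divide_less_eq mult.commute)
  then have "convergent_prod (\<lambda>j. g (j + N))" unfolding tail by (rule phil_hat_near_0(1)[OF d E])
  then have "convergent_prod g" by simp
  have "phil_hat \<theta> \<omega>0 lam nseq l x = prodinf g" by (simp add: phil_hat_def g_def[abs_def])
  also have "\<dots> = (\<Prod>k<N. g k) * (\<Prod>k. g (k + N))"
    using has_prod_ignore_initial_segment'[OF \<open>convergent_prod g\<close>, of N] by (simp add: has_prod_iff)
  also have "(\<Prod>k. g (k + N)) = phil_hat \<theta> \<omega>0 lam nseq l (x / 2 ^ N)"
    unfolding tail by (simp add: phil_hat_def)
  finally show ?thesis by (simp add: g_def)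
qed

lemma deriv_phil_hat_eq:
  assumes d: "d > 0" "d \<le> \<bar>U l 0\<bar>" and E: "mask_error d l * \<omega>0 \<le> 1/2" and x: "\<bar>x\<bar> < 2 ^ N * \<omega>0"
  shows "deriv (phil_hat \<theta> \<omega>0 lam nseq l) x
    = (\<Sum>i<N. dml l (x / 2 ^ Suc i) / 2 ^ Suc i * (\<Prod>j\<in>{..<N} - {i}. ml \<theta> \<omega>0 lam nseq l (x / 2 ^ Suc j)))
        * phil_hat \<theta> \<omega>0 lam nseq l (x / 2 ^ N)
      + (\<Prod>j<N. ml \<theta> \<omega>0 lam nseq l (x / 2 ^ Suc j)) * (deriv (phil_hat \<theta> \<omega>0 lam nseq l) (x / 2 ^ N) / 2 ^ N)"
    (is "_ = ?D")
proof (rule DERIV_imp_deriv)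
  have "\<bar>x / 2 ^ N\<bar> < \<omega>0" using x by (simp add: abs_divide divide_less_eq mult.commute)
  have "((\<lambda>z. phil_hat \<theta> \<omega>0 lam nseq l (z / 2 ^ N)) has_real_derivative
      deriv (phil_hat \<theta> \<omega>0 lam nseq l) (x / 2 ^ N) / 2 ^ N) (at x)"
    by (rule has_real_derivative_dilate[OF phil_hat_near_0(3)[OF d E \<open>\<bar>x / 2 ^ N\<bar> < \<omega>0\<close>]])
  from DERIV_mult[OF has_real_derivative_prod_dilates[OF ml_has_derivative] this]
  have "((\<lambda>z. (\<Prod>j<N. ml \<theta> \<omega>0 lam nseq l (z / 2 ^ Suc j)) * phil_hat \<theta> \<omega>0 lam nseq l (z / 2 ^ N))
      has_real_derivative ?D) (at x)"
    by (simp add: mult.commute)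
  then show "(phil_hat \<theta> \<omega>0 lam nseq l has_real_derivative ?D) (at x)"
    by (rule has_field_derivative_transform_within_open[where S="ball 0 (2 ^ N * \<omega>0)"])
       (use x phil_hat_eq_prod[OF d E] in \<open>auto simp: mult.commute\<close>)
qed

end

context meyer_summation
begin

lemma deriv_phiM_hat_eq:
  assumes "\<bar>x\<bar> < 2 ^ N * \<omega>0"
  shows "deriv (phiM_hat \<theta> \<omega>0) x
    = (\<Sum>i<N. dmM (x / 2 ^ Suc i) / 2 ^ Suc i * (\<Prod>j\<in>{..<N} - {i}. mM \<theta> \<omega>0 (x / 2 ^ Suc j)))"
    (is "_ = ?D")
proof (rule DERIV_imp_deriv)
  have "(\<Prod>j<N. mM \<theta> \<omega>0 (z / 2 ^ Suc j)) = phiM_hat \<theta> \<omega>0 z" if "z \<in> ball 0 (2 ^ N * \<omega>0)" for z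
  proof -
    have "\<bar>z / 2 ^ N\<bar> \<le> 2 * \<omega>0"
      using that omega0_pos by (simp add: abs_divide divide_le_eq mult.commute)
    then show ?thesis using phiM_hat_eq_prod[of z N] phiM_hat_eq_1 by simp
  qed
  then show "(phiM_hat \<theta> \<omega>0 has_real_derivative ?D) (at x)"
    using assms
    by (intro has_field_derivative_transform_within_open[OF has_real_derivative_prod_dilates[OF mM_has_derivative],
          where S="ball 0 (2 ^ N * \<omega>0)"]) auto
qed

lemma dilated_mask_bounds:
  fixes j :: nat
  assumes d: "d > 0" "d \<le> \<bar>U l 0\<bar>" and E: "mask_error d l \<le> 1" and x: "\<bar>x\<bar> < 2 ^ N * \<omega>0"
  defines "A \<equiv> 1 + 2 ^ N * \<omega>0 + dmM_bound" and "w \<equiv> x / 2 ^ Suc j"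
  shows "\<bar>mM \<theta> \<omega>0 w\<bar> \<le> A" "\<bar>ml \<theta> \<omega>0 lam nseq l w\<bar> \<le> A" "\<bar>dmM w / 2 ^ Suc j\<bar> \<le> A"
    and "\<bar>ml \<theta> \<omega>0 lam nseq l w - mM \<theta> \<omega>0 w\<bar> \<le> A * mask_error d l"
    and "\<bar>dml l w / 2 ^ Suc j - dmM w / 2 ^ Suc j\<bar> \<le> A * mask_error d l"
proof -
  define E where "E = mask_error d l"
  have E0: "E \<ge> 0" using mask_error_nonneg[OF d(1)] by (simp add: E_def)
  have A: "1 \<le> A" "2 ^ N * \<omega>0 \<le> A" "dmM_bound \<le> A"
    using omega0_pos dmM_bound_nonneg by (auto simp: A_def)
  have shrink: "\<bar>y\<bar> / 2 ^ Suc j \<le> \<bar>y\<bar>" for y :: real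
    using divide_left_mono[OF one_le_power[of "2::real" "Suc j"], where c="\<bar>y\<bar>"] by simp
  show mM: "\<bar>mM \<theta> \<omega>0 w\<bar> \<le> A" using abs_mM_le_1[of w] A(1) by simp
  have "\<bar>ml \<theta> \<omega>0 lam nseq l w - mM \<theta> \<omega>0 w\<bar> \<le> E * \<bar>w\<bar>"
    unfolding E_def by (rule abs_ml_minus_mM_le[OF d])
  also have "\<dots> \<le> E * (2 ^ N * \<omega>0)"
    using shrink[of x] x E0 by (intro mult_left_mono) (auto simp: w_def abs_divide)
  finally have ml_mM: "\<bar>ml \<theta> \<omega>0 lam nseq l w - mM \<theta> \<omega>0 w\<bar> \<le> E * (2 ^ N * \<omega>0)" .
  then show "\<bar>ml \<theta> \<omega>0 lam nseq l w - mM \<theta> \<omega>0 w\<bar> \<le> A * mask_error d l"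
    using mult_left_mono[OF A(2) E0] by (simp add: E_def mult.commute)
  have "E * (2 ^ N * \<omega>0) \<le> 1 * (2 ^ N * \<omega>0)"
    using E omega0_pos by (intro mult_right_mono) (auto simp: E_def)
  then show "\<bar>ml \<theta> \<omega>0 lam nseq l w\<bar> \<le> A"
    using ml_mM abs_mM_le_1[of w] dmM_bound_nonneg unfolding A_def abs_le_iff by linarith
  show "\<bar>dmM w / 2 ^ Suc j\<bar> \<le> A"
    using shrink[of "dmM w"] abs_dmM_le[of w] A(3) by (simp add: abs_divide)
  have "\<bar>dml l w / 2 ^ Suc j - dmM w / 2 ^ Suc j\<bar> \<le> \<bar>dml l w - dmM w\<bar>"
    using shrink[of "dml l w - dmM w"] by (simp add: diff_divide_distrib[symmetric] abs_divide)
  also have "\<dots> \<le> E" using abs_dml_minus_dmM_le[OF d] by (simp add: E_def)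
  finally show "\<bar>dml l w / 2 ^ Suc j - dmM w / 2 ^ Suc j\<bar> \<le> A * mask_error d l"
    using mult_right_mono[OF A(1) E0] by (simp add: E_def)
qed

lemma abs_deriv_phil_hat_minus_deriv_phiM_hat_le:
  assumes d: "d > 0" "d \<le> \<bar>U l 0\<bar>" and E: "mask_error d l \<le> 1" "mask_error d l * \<omega>0 \<le> 1/2"
    and x: "\<bar>x\<bar> < 2 ^ N * \<omega>0"
  shows "\<bar>deriv (phil_hat \<theta> \<omega>0 lam nseq l) x - deriv (phiM_hat \<theta> \<omega>0) x\<bar>
    \<le> (1 + 2 ^ N * \<omega>0 + dmM_bound) ^ N * (4 * real N ^ 2 + 6 * real N * \<omega>0 + 6) * mask_error d l"
proof -
  define E where "E = mask_error d l"
  define A where "A = 1 + 2 ^ N * \<omega>0 + dmM_bound"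
  define a where "a j = ml \<theta> \<omega>0 lam nseq l (x / 2 ^ Suc j)" for j
  define b where "b j = mM \<theta> \<omega>0 (x / 2 ^ Suc j)" for j
  define a' where "a' j = dml l (x / 2 ^ Suc j) / 2 ^ Suc j" for j
  define b' where "b' j = dmM (x / 2 ^ Suc j) / 2 ^ Suc j" for j
  define Da where "Da = (\<Sum>i<N. a' i * (\<Prod>j\<in>{..<N} - {i}. a j))"
  define Db where "Db = (\<Sum>i<N. b' i * (\<Prod>j\<in>{..<N} - {i}. b j))"
  define P where "P = phil_hat \<theta> \<omega>0 lam nseq l (x / 2 ^ N)"
  define P' where "P' = deriv (phil_hat \<theta> \<omega>0 lam nseq l) (x / 2 ^ N) / 2 ^ N"
  have "\<bar>x / 2 ^ N\<bar> < \<omega>0" using x by (simp add: abs_divide divide_less_eq mult.commute)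
  note near = phil_hat_near_0[OF d E(2) this]
  have P: "\<bar>P\<bar> \<le> 4" "\<bar>P - 1\<bar> \<le> 6 * (E * \<omega>0)" "\<bar>P'\<bar> \<le> 6 * E"
  proof -
    show "\<bar>P - 1\<bar> \<le> 6 * (E * \<omega>0)" using near(2) by (simp add: P_def E_def)
    then show "\<bar>P\<bar> \<le> 4" using E(2) unfolding E_def by linarith
    have "\<bar>P'\<bar> \<le> \<bar>deriv (phil_hat \<theta> \<omega>0 lam nseq l) (x / 2 ^ N)\<bar> / 1"
      unfolding P'_def abs_divide by (intro divide_left_mono) auto
    then show "\<bar>P'\<bar> \<le> 6 * E" using near(4) by (simp add: E_def)
  qed
  note bounds = dilated_mask_bounds[OF d E(1) x]
  have a: "\<bar>a j\<bar> \<le> A" and b: "\<bar>b j\<bar> \<le> A" and b': "\<bar>b' j\<bar> \<le> A"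
    and ab: "\<bar>a j - b j\<bar> \<le> A * E" and ab': "\<bar>a' j - b' j\<bar> \<le> A * E" for j
    using bounds[where j=j] by (simp_all add: a_def b_def a'_def b'_def A_def E_def)
  have "\<bar>Da - Db\<bar> \<le> real N ^ 2 * A ^ (N - 1) * (A * E)"
    unfolding Da_def Db_def
    using abs_sum_prod_remove_diff_le[of "{..<N}" a A b b' "A * E" a'] a b b' ab ab' by simp
  then have Da_Db: "\<bar>Da - Db\<bar> \<le> real N ^ 2 * A ^ N * E" by (cases N) (simp_all add: mult_ac)
  have Db: "\<bar>Db\<bar> \<le> real N * A ^ N"
    unfolding Db_def using abs_sum_prod_remove_le[of "{..<N}" b A b'] b b' by simp
  have Pa: "\<bar>\<Prod>j<N. a j\<bar> \<le> A ^ N" using abs_prod_le_power[of "{..<N}" a A] a by simp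
  have "deriv (phil_hat \<theta> \<omega>0 lam nseq l) x - deriv (phiM_hat \<theta> \<omega>0) x
      = (Da - Db) * P + Db * (P - 1) + (\<Prod>j<N. a j) * P'"
    unfolding deriv_phil_hat_eq[OF d E(2) x] deriv_phiM_hat_eq[OF x]
    by (simp add: Da_def Db_def a_def b_def a'_def b'_def P_def P'_def algebra_simps)
  also have "\<bar>\<dots>\<bar> \<le> (real N ^ 2 * A ^ N * E) * 4 + (real N * A ^ N) * (6 * (E * \<omega>0)) + A ^ N * (6 * E)"
    using abs_mult_le[OF Da_Db P(1)] abs_mult_le[OF Db P(2)] abs_mult_le[OF Pa P(3)]
      abs_triangle_ineq[of "(Da - Db) * P + Db * (P - 1)" "(\<Prod>j<N. a j) * P'"]
      abs_triangle_ineq[of "(Da - Db) * P" "Db * (P - 1)"]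
    by linarith
  also have "\<dots> = A ^ N * (4 * real N ^ 2 + 6 * real N * \<omega>0 + 6) * E" by (simp add: algebra_simps)
  finally show ?thesis by (simp add: A_def E_def)
qed

end

context meyer_summation
begin

lemma mu_tendsto_0:
  assumes "(\<lambda>l. al l) \<in> o(\<lambda>l. 1 / real l)" "(\<lambda>l. ga l) \<in> o(\<lambda>l. 1)"
  shows "(\<lambda>l. mu \<theta> \<omega>0 lam nseq l) \<longlonglongrightarrow> 0"
  using tendsto_add[OF smalloD_tendsto[OF assms(1)] smalloD_tendsto[OF assms(2)]]
  by (simp add: mu_def mult.commute)

lemma mu_nonneg: "mu \<theta> \<omega>0 lam nseq l \<ge> 0"
  using alpha_nonneg[of l] gamma_nonneg[of l] by (simp add: mu_def)

lemma mask_error_le_mu: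
  assumes "d > 0" "l \<ge> 1"
  shows "mask_error d l \<le> (1 + dmM_bound) / d * mu \<theta> \<omega>0 lam nseq l"
proof -
  have "dmM_bound * al l \<le> dmM_bound * (real l * al l)"
    using assms(2) alpha_nonneg[of l] dmM_bound_nonneg
    by (intro mult_left_mono) (auto simp: mult_le_cancel_right1)
  moreover have "(1 + dmM_bound) * (real l * al l + ga l)
      = real l * al l + ga l + dmM_bound * (real l * al l) + dmM_bound * ga l"
    by (simp add: algebra_simps)
  ultimately have "real l * al l + ga l + dmM_bound * al l \<le> (1 + dmM_bound) * mu \<theta> \<omega>0 lam nseq l"
    using mult_nonneg_nonneg[OF dmM_bound_nonneg gamma_nonneg[of l]] unfolding mu_def by linarith
  then show ?thesis using assms(1) by (simp add: mask_error_def divide_right_mono)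
qed

lemma supnorm_deriv_phil_hat_le:
  assumes d: "d > 0" "d \<le> \<bar>U l 0\<bar>" and l: "l \<ge> 1"
    and small: "(1 + dmM_bound) / d * mu \<theta> \<omega>0 lam nseq l \<le> min 1 (1 / (2 * \<omega>0))"
    and ab: "a < b" and N: "max \<bar>a\<bar> \<bar>b\<bar> < 2 ^ N * \<omega>0"
  shows "\<bar>supnorm {a..b} (\<lambda>\<omega>. deriv (phil_hat \<theta> \<omega>0 lam nseq l) \<omega> - deriv (phiM_hat \<theta> \<omega>0) \<omega>)\<bar>
    \<le> (1 + 2 ^ N * \<omega>0 + dmM_bound) ^ N * (4 * real N ^ 2 + 6 * real N * \<omega>0 + 6)
       * ((1 + dmM_bound) / d * mu \<theta> \<omega>0 lam nseq l)"
    (is "\<bar>supnorm _ ?f\<bar> \<le> ?C * ?K")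
proof -
  have E: "mask_error d l \<le> ?K" using mask_error_le_mu[OF d(1) l] .
  have "K \<le> 1 / (2 * \<omega>0) \<Longrightarrow> K * \<omega>0 \<le> 1/2" for K
    using omega0_pos by (simp add: le_divide_eq)
  then have small': "mask_error d l \<le> 1" "mask_error d l * \<omega>0 \<le> 1/2"
    using E small mult_right_mono[OF E less_imp_le[OF omega0_pos]] by auto
  have C: "?C \<ge> 0" using omega0_pos dmM_bound_nonneg by simp
  have bound: "\<bar>?f x\<bar> \<le> ?C * ?K" if "x \<in> {a..b}" for x
  proof -
    have "\<bar>x\<bar> \<le> max \<bar>a\<bar> \<bar>b\<bar>"
      using that abs_ge_self[of b] abs_ge_minus_self[of a] by (auto simp: abs_le_iff le_max_iff_disj)
    then have "\<bar>x\<bar> < 2 ^ N * \<omega>0" using N by linarith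
    then have "\<bar>?f x\<bar> \<le> ?C * mask_error d l"
      using abs_deriv_phil_hat_minus_deriv_phiM_hat_le[OF d small'] by (simp add: mult_ac)
    also have "\<dots> \<le> ?C * ?K" by (rule mult_left_mono[OF E C])
    finally show ?thesis .
  qed
  have "\<bar>?f a\<bar> \<le> supnorm {a..b} ?f" using ab by (intro abs_le_supnorm[OF bound]) auto
  moreover have "supnorm {a..b} ?f \<le> ?C * ?K" using ab by (intro supnorm_le[OF bound]) auto
  ultimately show ?thesis by linarith
qed

end

theorem lemma8:
  fixes \<theta> :: "real \<Rightarrow> real" and \<omega>0 :: real
    and lam :: "nat \<Rightarrow> nat \<Rightarrow> real" and nseq :: "nat \<Rightarrow> nat" and l0 :: nat
  assumes odd: "\<And>x. \<theta> (- x) = - \<theta> x"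
    and mono: "mono \<theta>"
    and C2: "\<And>x. \<theta> differentiable at x" "\<And>x. deriv \<theta> differentiable at x"
            "continuous_on UNIV (deriv (deriv \<theta>))"
    and flat: "\<And>x. x > pi / 3 \<Longrightarrow> \<theta> x = pi / 4"
    and w0: "pi / 3 \<le> \<omega>0" "\<omega>0 < pi / 2"
    and alpha_o: "(\<lambda>l. alpha \<theta> \<omega>0 lam nseq l) \<in> o(\<lambda>l. 1 / real l)"
    and gamma_o: "(\<lambda>l. gamma \<theta> \<omega>0 lam nseq l) \<in> o(\<lambda>l. 1)"
    and upi: "\<And>l. ul \<theta> \<omega>0 lam nseq l pi \<noteq> 0"
    and u0: "(INF l\<in>{l0..}. \<bar>ul \<theta> \<omega>0 lam nseq l 0\<bar>) > 0"
    and ab: "a < b"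
  shows "(\<lambda>l. supnorm {a..b}
            (\<lambda>\<omega>. deriv (phil_hat \<theta> \<omega>0 lam nseq l) \<omega> - deriv (phiM_hat \<theta> \<omega>0) \<omega>))
         \<in> O(\<lambda>l. mu \<theta> \<omega>0 lam nseq l)"
proof -
  interpret meyer_summation \<theta> \<omega>0 lam nseq
    by unfold_locales (use odd C2 flat w0 in auto)
  define \<delta> where "\<delta> = (INF l\<in>{l0..}. \<bar>U l 0\<bar>)"
  have \<delta>: "\<delta> > 0" "\<And>l. l \<ge> l0 \<Longrightarrow> \<delta> \<le> \<bar>U l 0\<bar>"
    using u0 unfolding \<delta>_def by (auto intro!: cINF_lower bdd_belowI[of _ 0])
  obtain N :: nat where "max \<bar>a\<bar> \<bar>b\<bar> / \<omega>0 < 2 ^ N" using real_arch_pow[of 2] by fastforce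
  then have N: "max \<bar>a\<bar> \<bar>b\<bar> < 2 ^ N * \<omega>0" using omega0_pos by (simp add: divide_less_eq)
  have "((\<lambda>l. (1 + dmM_bound) / \<delta> * mu \<theta> \<omega>0 lam nseq l) \<longlongrightarrow> 0) at_top"
    using tendsto_mult_right_zero[OF mu_tendsto_0[OF alpha_o gamma_o]] .
  then have "\<forall>\<^sub>F l in at_top. (1 + dmM_bound) / \<delta> * mu \<theta> \<omega>0 lam nseq l < min 1 (1 / (2 * \<omega>0))"
    using omega0_pos by (intro order_tendstoD) auto
  then have "\<forall>\<^sub>F l in at_top. norm (supnorm {a..b}
      (\<lambda>\<omega>. deriv (phil_hat \<theta> \<omega>0 lam nseq l) \<omega> - deriv (phiM_hat \<theta> \<omega>0) \<omega>))
      \<le> (1 + 2 ^ N * \<omega>0 + dmM_bound) ^ N * (4 * real N ^ 2 + 6 * real N * \<omega>0 + 6)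
         * ((1 + dmM_bound) / \<delta>) * norm (mu \<theta> \<omega>0 lam nseq l)"
    using eventually_ge_at_top[of "max l0 1"]
  proof eventually_elim
    case (elim l)
    then have "l0 \<le> l" "1 \<le> l" by auto
    from supnorm_deriv_phil_hat_le[OF \<delta>(1) \<delta>(2)[OF this(1)] this(2) less_imp_le[OF elim(1)] ab N]
    show ?case using mu_nonneg[of l] by (simp add: mult_ac)
  qed
  then show ?thesis by (rule bigoI)
qed

end
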